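(* Let $0<f_1<f_2<f_3$, let $2h=1$, and on $M_h$ let $F_L=\ell_{12}^2+\ell_{13}^2+\ell_{14}^2$ and $J_1=1-\sqrt{1-F_L}$. Then $J_1$ is an almost global $S^1$-action on $M_h$.
   Context: $\mathbf L=(\ell_{12},\ell_{13},\ell_{14},\ell_{23},\ell_{24},\ell_{34})\in\mathbb R^6\cong\mathfrak{so}(4)^*$ with the Lie–Poisson bracket of $\mathfrak{so}(4)$ (extending $\ell_{ji}=-\ell_{ij}$: $\{\ell_{ij},\ell_{jk}\}=-\ell_{ik}$ for distinct $i,j,k$, and $\{\ell_{ij},\ell_{kl}\}=0$ when $\{i,j\}\cap\{k,l\}=\emptyset$). $M_h=\{\mathbf L:\sum_{i<j}\ell_{ij}^2=2h,\ \ell_{12}\ell_{34}-\ell_{13}\ell_{24}+\ell_{14}\ell_{23}=0\}\cong S^2\times S^2$. Together with $G_L=f_1\ell_{34}^2+f_2\ell_{24}^2+f_3\ell_{23}^2$, $F_L$ forms the reduced Lamé integrable system. A function is an almost global $S^1$-action if its Hamiltonian vector field generates a $2\pi$-periodic flow (an $S^1$-action) everywhere except on the preimage of an isolated point of the image of the momentum map, where the function fails to be smooth / the vector field is undefined (here the set $F_L=1$, i.e. $\ell_{23}=\ell_{24}=\ell_{34}=0$). *)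

theory Defs
  imports "HOL-Analysis.Analysis"
begin

text \<open>Coordinates of so(4)* = R^6: index type for the six components l12,...,l34.\<close>

datatype idx = I12 | I13 | I14 | I23 | I24 | I34

lemma UNIV_idx: "(UNIV :: idx set) = {I12, I13, I14, I23, I24, I34}"
  by (auto intro: idx.exhaust)

instance idx :: finite
  by standard (simp add: UNIV_idx)

type_synonym vec6 = "real ^ idx"

fun fi :: "idx \<Rightarrow> nat" where
  "fi I12 = 1" | "fi I13 = 1" | "fi I14 = 1" | "fi I23 = 2" | "fi I24 = 2" | "fi I34 = 3"
fun fj :: "idx \<Rightarrow> nat" where
  "fj I12 = 2" | "fj I13 = 3" | "fj I14 = 4" | "fj I23 = 3" | "fj I24 = 4" | "fj I34 = 4"

text \<open>l_ij for arbitrary i,j in 1..4, extended antisymmetrically (l_ji = - l_ij, l_ii = 0).\<close>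
definition lc :: "vec6 \<Rightarrow> nat \<Rightarrow> nat \<Rightarrow> real" where
  "lc L i j = (if \<exists>a. fi a = i \<and> fj a = j then L $ (THE a. fi a = i \<and> fj a = j)
              else if \<exists>a. fi a = j \<and> fj a = i then - (L $ (THE a. fi a = j \<and> fj a = i))
              else 0)"

definition kd :: "nat \<Rightarrow> nat \<Rightarrow> real" where
  "kd i j = (if i = j then 1 else 0)"

text \<open>Lie--Poisson bracket of coordinate functions {l_a, l_b}(L) of so(4):
  {l_ij, l_kl} = - d_jk l_il + d_ik l_jl + d_jl l_ik - d_il l_jk,
  which is the unique bilinear extension of {l_ij,l_jk} = -l_ik, {l_ij,l_kl} = 0 for disjoint pairs.\<close>
definition lpb :: "vec6 \<Rightarrow> idx \<Rightarrow> idx \<Rightarrow> real" where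
  "lpb L a b = (let i = fi a; j = fj a; k = fi b; l = fj b in
     - kd j k * lc L i l + kd i k * lc L j l + kd j l * lc L i k - kd i l * lc L j k)"

text \<open>Hamiltonian vector field X_H of H w.r.t. the Lie--Poisson structure:
  (X_H)_a = {l_a, H} = sum_b {l_a, l_b} dH/dl_b.\<close>
definition hamvf :: "(vec6 \<Rightarrow> real) \<Rightarrow> vec6 \<Rightarrow> vec6" where
  "hamvf H L = (\<chi> a. \<Sum>b\<in>UNIV. lpb L a b * frechet_derivative H (at L) (axis b 1))"

text \<open>M_h: sum of squares = 2h, Pfaffian = 0.\<close>
definition Mh :: "real \<Rightarrow> vec6 set" where
  "Mh h = {L. (\<Sum>a\<in>UNIV. (L $ a)\<^sup>2) = 2 * h \<and>
              L$I12 * L$I34 - L$I13 * L$I24 + L$I14 * L$I23 = 0}"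

definition FL :: "vec6 \<Rightarrow> real" where
  "FL L = (L$I12)\<^sup>2 + (L$I13)\<^sup>2 + (L$I14)\<^sup>2"

definition GL :: "real \<Rightarrow> real \<Rightarrow> real \<Rightarrow> vec6 \<Rightarrow> real" where
  "GL f1 f2 f3 L = f1 * (L$I34)\<^sup>2 + f2 * (L$I24)\<^sup>2 + f3 * (L$I23)\<^sup>2"

definition J1 :: "vec6 \<Rightarrow> real" where
  "J1 L = 1 - sqrt (1 - FL L)"

text \<open>H is an almost global S^1-action on M with exceptional set S (the preimage of an
  isolated point of the momentum image): off S, H is differentiable and its Hamiltonian
  flow through every point exists for all times, stays in M - S and is 2pi-periodic;
  on S, H fails to be differentiable.\<close>
definition almost_global_S1 :: "(vec6 \<Rightarrow> real) \<Rightarrow> vec6 set \<Rightarrow> vec6 set \<Rightarrow> bool" where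
  "almost_global_S1 H M S \<longleftrightarrow>
     (\<forall>p\<in>S. \<not> H differentiable (at p)) \<and>
     (\<forall>p\<in>M - S. H differentiable (at p)) \<and>
     (\<forall>p\<in>M - S. \<exists>\<gamma> :: real \<Rightarrow> vec6.
        \<gamma> 0 = p \<and> (\<forall>t. \<gamma> t \<in> M - S) \<and>
        (\<forall>t. (\<gamma> has_vector_derivative hamvf H (\<gamma> t)) (at t)) \<and>
        (\<forall>t. \<gamma> (t + 2 * pi) = \<gamma> t))"

end

theory Submission
  imports Defs
begin

unbundle cross3_syntax

text \<open>Write \<open>l = (l\<^sub>1\<^sub>2, l\<^sub>1\<^sub>3, l\<^sub>1\<^sub>4)\<close> and \<open>n = (l\<^sub>3\<^sub>4, -l\<^sub>2\<^sub>4, l\<^sub>2\<^sub>3)\<close>. The Pfaffian is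
  \<open>l \<bullet> n\<close>, and for \<open>2h = 1\<close> the sphere condition reads \<open>|l|\<^sup>2 + |n|\<^sup>2 = 1\<close>, so that
  \<open>sqrt (1 - F\<^sub>L) = |n|\<close> on \<open>M\<^sub>h\<close>. The Hamiltonian vector field of \<open>J\<^sub>1\<close> moves only \<open>l\<close>, with
  velocity \<open>l \<times> n / |n|\<close>: the vector \<open>n\<close> is conserved and \<open>l \<perp> n\<close> rotates about the axis \<open>n\<close>
  with unit angular speed, so every orbit off \<open>{F\<^sub>L = 1} = {n = 0}\<close> is \<open>2\<pi>\<close>-periodic.
  On \<open>{F\<^sub>L = 1}\<close>, restricting \<open>1 - J\<^sub>1\<close> to the ray through \<open>l\<close> gives the square root of a
  function with a simple zero, which is not differentiable.\<close>

lemma real_sqrt_not_differentiable_at_simple_zero: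
  fixes f :: "real \<Rightarrow> real"
  assumes f: "(f has_real_derivative D) (at x)" and "f x = 0" and "D \<noteq> 0"
  shows "\<not> (\<lambda>s. sqrt (f s)) differentiable (at x)"
proof
  assume "(\<lambda>s. sqrt (f s)) differentiable (at x)"
  then obtain G where "((\<lambda>s. sqrt (f s)) has_real_derivative G) (at x)"
    using real_differentiable_def by blast
  \<comment> \<open>\<open>sqrt\<close> is odd in Isabelle, so \<open>sqrt y * sqrt y = \<bar>y\<bar>\<close> for every real \<open>y\<close>\<close>
  from DERIV_mult[OF this this] have "((\<lambda>s. \<bar>f s\<bar>) has_real_derivative 0) (at x)"
    using \<open>f x = 0\<close> by simp
  then have "((\<lambda>s. \<bar>f s\<bar> / (s - x)) \<longlongrightarrow> 0) (at_right x)"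
    using \<open>f x = 0\<close> unfolding has_field_derivative_iff filterlim_at_split by simp
  moreover have "((\<lambda>s. \<bar>f s\<bar> / (s - x)) \<longlongrightarrow> \<bar>D\<bar>) (at_right x)"
  proof (rule Lim_transform_eventually)
    have "((\<lambda>s. f s / (s - x)) \<longlongrightarrow> D) (at_right x)"
      using f \<open>f x = 0\<close> unfolding has_field_derivative_iff filterlim_at_split by simp
    then show "((\<lambda>s. \<bar>f s / (s - x)\<bar>) \<longlongrightarrow> \<bar>D\<bar>) (at_right x)"
      by (rule tendsto_rabs)
    show "\<forall>\<^sub>F s in at_right x. \<bar>f s / (s - x)\<bar> = \<bar>f s\<bar> / (s - x)"
      using eventually_at_right_less[of x] by eventually_elim simp
  qed
  ultimately have "\<bar>D\<bar> = 0"
    using tendsto_unique trivial_limit_at_right_real by blast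
  with \<open>D \<noteq> 0\<close> show False by simp
qed

lemma axial_rotation_orbit:
  fixes u k :: "real^3"
  assumes "norm k = 1" and "u \<bullet> k = 0"
  obtains \<rho> where "\<rho> 0 = u" and "\<And>t. norm (\<rho> t) = norm u" and "\<And>t. \<rho> t \<bullet> k = 0"
    and "\<And>t. (\<rho> has_vector_derivative \<rho> t \<times> k) (at t)" and "\<And>t. \<rho> (t + 2 * pi) = \<rho> t"
proof
  define \<rho> where "\<rho> t = cos t *\<^sub>R u + sin t *\<^sub>R (u \<times> k)" for t
  have kk: "k \<bullet> k = 1"
    using assms(1) by (simp add: power2_norm_eq_inner[symmetric])
  have norm_uk: "norm (u \<times> k) = norm u"
    using norm_cross[of u k] assms by (simp add: power2_eq_iff_nonneg)
  show "\<rho> 0 = u" and "\<rho> (t + 2 * pi) = \<rho> t" for t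
    by (simp_all add: \<rho>_def)
  show "\<rho> t \<bullet> k = 0" for t
    using assms(2) by (simp add: \<rho>_def inner_add_left dot_cross_self)
  show "norm (\<rho> t) = norm u" for t
  proof -
    have "(norm (\<rho> t))\<^sup>2 = (cos t)\<^sup>2 * (norm u)\<^sup>2 + (sin t)\<^sup>2 * (norm (u \<times> k))\<^sup>2"
      unfolding power2_norm_eq_inner \<rho>_def
      by (simp add: inner_add_left inner_add_right dot_cross_self power2_eq_square)
    also have "\<dots> = (norm u)\<^sup>2"
      by (simp add: norm_uk flip: distrib_right)
    finally have "(norm (\<rho> t))\<^sup>2 = (norm u)\<^sup>2" .
    then show ?thesis
      by (simp add: power2_eq_iff_nonneg)
  qed
  show "(\<rho> has_vector_derivative \<rho> t \<times> k) (at t)" for t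
  proof -
    have "(u \<times> k) \<times> k = - u"
      using Lagrange[of k u k] assms(2) kk by (simp add: cross_skew[of _ k] inner_commute)
    then have "\<rho> t \<times> k = - sin t *\<^sub>R u + cos t *\<^sub>R (u \<times> k)"
      by (simp add: \<rho>_def cross_add_left cross_mult_left)
    moreover have "(\<rho> has_vector_derivative - sin t *\<^sub>R u + cos t *\<^sub>R (u \<times> k)) (at t)"
      unfolding \<rho>_def[abs_def] by (auto intro!: derivative_eq_intros)
    ultimately show ?thesis by simp
  qed
qed


definition lpart :: "vec6 \<Rightarrow> real^3" where
  "lpart L = vector [L$I12, L$I13, L$I14]"

definition npart :: "vec6 \<Rightarrow> real^3" where
  "npart L = vector [L$I34, - L$I24, L$I23]"

definition of_parts :: "real^3 \<Rightarrow> real^3 \<Rightarrow> vec6" where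
  "of_parts u v = (\<chi> a. case a of I12 \<Rightarrow> u$1 | I13 \<Rightarrow> u$2 | I14 \<Rightarrow> u$3
                                 | I23 \<Rightarrow> v$3 | I24 \<Rightarrow> - v$2 | I34 \<Rightarrow> v$1)"

lemma lpart_components: "lpart L $ 1 = L$I12" "lpart L $ 2 = L$I13" "lpart L $ 3 = L$I14"
  and npart_components: "npart L $ 1 = L$I34" "npart L $ 2 = - L$I24" "npart L $ 3 = L$I23"
  by (simp_all add: lpart_def npart_def)

lemma bounded_linear_lpart: "bounded_linear lpart"
  by (rule linear_conv_bounded_linear[THEN iffD1], rule linearI)
     (simp_all add: lpart_def vec_eq_iff forall_3)

lemma lpart_of_parts [simp]: "lpart (of_parts u v) = u"
  and npart_of_parts [simp]: "npart (of_parts u v) = v"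
  by (simp_all add: lpart_def npart_def of_parts_def vec_eq_iff forall_3)

lemma of_parts_lpart_npart [simp]: "of_parts (lpart L) (npart L) = L"
  by (simp add: of_parts_def lpart_def npart_def vec_eq_iff split: idx.split)

lemma FL_eq_norm_lpart: "FL L = (norm (lpart L))\<^sup>2"
  unfolding FL_def power2_norm_eq_inner by (simp add: lpart_def inner_vec_def sum_3 power2_eq_square)

lemma Mh_iff:
  "L \<in> Mh h \<longleftrightarrow> (norm (lpart L))\<^sup>2 + (norm (npart L))\<^sup>2 = 2 * h \<and> lpart L \<bullet> npart L = 0"
  unfolding power2_norm_eq_inner
  by (simp add: Mh_def UNIV_idx lpart_def npart_def inner_vec_def sum_3 power2_eq_square
      algebra_simps)

lemma FL_le_of_mem_Mh:
  assumes "L \<in> Mh h"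
  shows "FL L \<le> 2 * h"
proof -
  have "FL L + (norm (npart L))\<^sup>2 = 2 * h"
    using assms by (simp add: Mh_iff FL_eq_norm_lpart)
  then show ?thesis
    using zero_le_power2[of "norm (npart L)"] by linarith
qed

lemma has_vector_derivative_of_parts:
  assumes "(f has_vector_derivative f') F"
  shows "((\<lambda>t. of_parts (f t) v) has_vector_derivative of_parts f' 0) F"
proof -
  have "linear (\<lambda>u. of_parts u 0)"
    by (rule linearI) (simp_all add: of_parts_def vec_eq_iff split: idx.split)
  then have "((\<lambda>t. of_parts (f t) 0) has_vector_derivative of_parts f' 0) F"
    by (rule bounded_linear.has_vector_derivative[OF linear_conv_bounded_linear[THEN iffD1] assms])
  then have "((\<lambda>t. of_parts (f t) 0 + of_parts 0 v) has_vector_derivative of_parts f' 0) F"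
    by (simp add: has_vector_derivative_add_const)
  moreover have "of_parts u 0 + of_parts 0 v = of_parts u v" for u
    by (simp add: of_parts_def vec_eq_iff split: idx.split)
  ultimately show ?thesis by simp
qed

lemma J1_has_derivative:
  assumes "FL L < 1"
  shows "(J1 has_derivative (\<lambda>H. (lpart L \<bullet> lpart H) / sqrt (1 - FL L))) (at L)"
proof -
  have "((\<lambda>L. lpart L \<bullet> lpart L) has_derivative
      (\<lambda>H. lpart L \<bullet> lpart H + lpart H \<bullet> lpart L)) (at L)"
    by (intro has_derivative_inner bounded_linear.has_derivative[OF bounded_linear_lpart]
        has_derivative_ident)
  moreover have "(\<lambda>L. lpart L \<bullet> lpart L) = FL"
    by (simp add: fun_eq_iff FL_eq_norm_lpart power2_norm_eq_inner)
  ultimately have "(FL has_derivative (\<lambda>H. lpart L \<bullet> lpart H + lpart H \<bullet> lpart L)) (at L)"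
    by simp
  then have "((\<lambda>L. sqrt (1 - FL L)) has_derivative (\<lambda>H. (0 - (lpart L \<bullet> lpart H + lpart H \<bullet> lpart L))
      * (inverse (sqrt (1 - FL L)) / 2))) (at L)"
    using assms
    by (intro DERIV_compose_FDERIV DERIV_real_sqrt has_derivative_diff has_derivative_const) simp_all
  then have "(J1 has_derivative (\<lambda>H. 0 - (0 - (lpart L \<bullet> lpart H + lpart H \<bullet> lpart L))
      * (inverse (sqrt (1 - FL L)) / 2))) (at L)"
    unfolding J1_def[abs_def] by (intro has_derivative_diff has_derivative_const)
  then show ?thesis
    by (rule has_derivative_eq_rhs) (simp add: fun_eq_iff inner_commute field_simps)
qed

lemma fi_fj_iff:
  "fi a = i \<and> fj a = j \<longleftrightarrow>
     a = I12 \<and> i = 1 \<and> j = 2 \<or> a = I13 \<and> i = 1 \<and> j = 3 \<or> a = I14 \<and> i = 1 \<and> j = 4 \<or>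
     a = I23 \<and> i = 2 \<and> j = 3 \<or> a = I24 \<and> i = 2 \<and> j = 4 \<or> a = I34 \<and> i = 3 \<and> j = 4"
  by (cases a) auto

text \<open>Stated with \<open>Suc 0\<close> rather than \<open>1\<close>, the form in which index \<open>1\<close> reaches
  \<^const>\<open>lc\<close> when \<^const>\<open>lpb\<close> is unfolded.\<close>

lemma lc_simps:
  "lc L (Suc 0) 2 = L$I12" "lc L (Suc 0) 3 = L$I13" "lc L (Suc 0) 4 = L$I14"
  "lc L 2 3 = L$I23" "lc L 2 4 = L$I24" "lc L 3 4 = L$I34"
  "lc L 2 (Suc 0) = - L$I12" "lc L 3 (Suc 0) = - L$I13" "lc L 4 (Suc 0) = - L$I14"
  "lc L 3 2 = - L$I23" "lc L 4 2 = - L$I24" "lc L 4 3 = - L$I34"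
  "lc L (Suc 0) (Suc 0) = 0" "lc L 2 2 = 0" "lc L 3 3 = 0" "lc L 4 4 = 0"
  by (simp_all add: lc_def fi_fj_iff)

lemma hamvf_J1:
  assumes "FL L < 1"
  shows "hamvf J1 L = of_parts ((lpart L \<times> npart L) /\<^sub>R sqrt (1 - FL L)) 0"
proof -
  have axis_coord: "lpart L \<bullet> lpart (axis b 1) =
      (case b of I12 \<Rightarrow> L$I12 | I13 \<Rightarrow> L$I13 | I14 \<Rightarrow> L$I14 | _ \<Rightarrow> 0)" for b
    by (cases b) (simp_all add: lpart_def inner_vec_def sum_3 axis_def)
  show ?thesis
    unfolding hamvf_def frechet_derivative_at[OF J1_has_derivative[OF assms], symmetric] vec_eq_iff
  proof
    fix a
    show "(\<chi> a. \<Sum>b\<in>UNIV. lpb L a b * (lpart L \<bullet> lpart (axis b 1) / sqrt (1 - FL L))) $ a =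
        of_parts ((lpart L \<times> npart L) /\<^sub>R sqrt (1 - FL L)) 0 $ a"
      by (cases a) (simp_all add: axis_coord UNIV_idx lpb_def kd_def lc_simps Let_def of_parts_def
          lpart_components npart_components cross_components divide_inverse algebra_simps)
  qed
qed

lemma J1_not_differentiable:
  assumes "FL p = 1"
  shows "\<not> J1 differentiable (at p)"
proof
  assume J1_diff: "J1 differentiable (at p)"
  define c where "c s = p + s *\<^sub>R of_parts (lpart p) 0" for s :: real
  have "c differentiable (at 0)"
    unfolding c_def by (auto intro!: derivative_eq_intros simp: differentiable_def)
  moreover have "J1 differentiable (at (c 0))"
    using J1_diff by (simp add: c_def)
  ultimately have "(\<lambda>s. 1 - J1 (c s)) differentiable (at 0)"
    using differentiable_chain_at[of c 0 J1] by (simp add: o_def)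
  moreover have "1 - J1 (c s) = sqrt (1 - (1 + s)\<^sup>2)" for s
  proof -
    interpret lpart: bounded_linear lpart
      by (rule bounded_linear_lpart)
    have "lpart (c s) = (1 + s) *\<^sub>R lpart p"
      by (simp add: c_def lpart.add lpart.scaleR algebra_simps)
    then have "FL (c s) = (1 + s)\<^sup>2"
      using assms by (simp add: FL_eq_norm_lpart power_mult_distrib)
    then show ?thesis by (simp add: J1_def)
  qed
  moreover have "((\<lambda>s. 1 - (1 + s)\<^sup>2) has_real_derivative - 2) (at (0::real))"
    by (auto intro!: derivative_eq_intros)
  ultimately show False
    using real_sqrt_not_differentiable_at_simple_zero[of "\<lambda>s. 1 - (1 + s)\<^sup>2" "- 2" 0] by simp
qed

lemma J1_periodic_orbit:
  assumes "p \<in> Mh h" and "2 * h = 1" and "FL p < 1"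
  obtains \<gamma> where "\<gamma> 0 = p" and "\<And>t. \<gamma> t \<in> Mh h" and "\<And>t. FL (\<gamma> t) = FL p"
    and "\<And>t. (\<gamma> has_vector_derivative hamvf J1 (\<gamma> t)) (at t)" and "\<And>t. \<gamma> (t + 2 * pi) = \<gamma> t"
proof -
  define n where "n = npart p"
  have sphere: "(norm (lpart p))\<^sup>2 + (norm n)\<^sup>2 = 1" and "lpart p \<bullet> n = 0"
    using assms(1,2) by (simp_all add: Mh_iff n_def)
  then have norm_n: "norm n = sqrt (1 - FL p)"
    by (intro real_sqrt_unique[symmetric]) (simp_all add: FL_eq_norm_lpart)
  then have "n \<noteq> 0"
    using assms(3) by auto
  define k where "k = n /\<^sub>R norm n"
  have "norm k = 1" and "lpart p \<bullet> k = 0"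
    using \<open>n \<noteq> 0\<close> \<open>lpart p \<bullet> n = 0\<close> by (simp_all add: k_def)
  obtain \<rho> where \<rho>: "\<rho> 0 = lpart p" "\<And>t. norm (\<rho> t) = norm (lpart p)" "\<And>t. \<rho> t \<bullet> k = 0"
    "\<And>t. (\<rho> has_vector_derivative \<rho> t \<times> k) (at t)" "\<And>t. \<rho> (t + 2 * pi) = \<rho> t"
    using axial_rotation_orbit[OF \<open>norm k = 1\<close> \<open>lpart p \<bullet> k = 0\<close>] by blast
  define \<gamma> where "\<gamma> t = of_parts (\<rho> t) n" for t
  have FL_\<gamma>: "FL (\<gamma> t) = FL p" for t
    by (simp add: \<gamma>_def FL_eq_norm_lpart \<rho>(2))
  show ?thesis
  proof
    show "\<gamma> 0 = p" and "\<gamma> (t + 2 * pi) = \<gamma> t" for t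
      by (simp_all add: \<gamma>_def \<rho>(1,5) n_def)
    show "\<gamma> t \<in> Mh h" for t
      using sphere \<rho>(3)[of t] \<open>n \<noteq> 0\<close> assms(2)
      by (simp add: Mh_iff \<gamma>_def \<rho>(2) k_def)
    show "FL (\<gamma> t) = FL p" for t
      by (rule FL_\<gamma>)
    show "(\<gamma> has_vector_derivative hamvf J1 (\<gamma> t)) (at t)" for t
    proof -
      have "hamvf J1 (\<gamma> t) = of_parts ((\<rho> t \<times> n) /\<^sub>R sqrt (1 - FL p)) 0"
        using hamvf_J1[of "\<gamma> t"] FL_\<gamma>[of t] assms(3) by (simp add: \<gamma>_def)
      also have "\<dots> = of_parts (\<rho> t \<times> k) 0"
        by (simp add: k_def norm_n cross_mult_right)
      finally have "hamvf J1 (\<gamma> t) = of_parts (\<rho> t \<times> k) 0" .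
      with has_vector_derivative_of_parts[OF \<rho>(4)] show ?thesis
        by (simp add: \<gamma>_def[abs_def])
    qed
  qed
qed

theorem lemma13:
  fixes f1 f2 f3 h :: real
  assumes "0 < f1" and "f1 < f2" and "f2 < f3" and "2 * h = 1"
  shows "almost_global_S1 J1 (Mh h) {L \<in> Mh h. FL L = 1}"
proof -
  have regular: "FL p < 1" if "p \<in> Mh h - {L \<in> Mh h. FL L = 1}" for p
    using that FL_le_of_mem_Mh[of p h] assms(4) by auto
  show ?thesis
    unfolding almost_global_S1_def
  proof (intro conjI ballI)
    fix p assume "p \<in> {L \<in> Mh h. FL L = 1}"
    then show "\<not> J1 differentiable (at p)"
      by (simp add: J1_not_differentiable)
  next
    fix p assume "p \<in> Mh h - {L \<in> Mh h. FL L = 1}"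
    then show "J1 differentiable (at p)"
      using J1_has_derivative regular differentiable_def by blast
  next
    fix p assume p: "p \<in> Mh h - {L \<in> Mh h. FL L = 1}"
    then obtain \<gamma> where "\<gamma> 0 = p" "\<And>t. \<gamma> t \<in> Mh h" "\<And>t. FL (\<gamma> t) = FL p"
      "\<And>t. (\<gamma> has_vector_derivative hamvf J1 (\<gamma> t)) (at t)" "\<And>t. \<gamma> (t + 2 * pi) = \<gamma> t"
      using J1_periodic_orbit assms(4) regular by blast
    with regular[OF p] show "\<exists>\<gamma> :: real \<Rightarrow> vec6. \<gamma> 0 = p \<and> (\<forall>t. \<gamma> t \<in> Mh h - {L \<in> Mh h. FL L = 1})
        \<and> (\<forall>t. (\<gamma> has_vector_derivative hamvf J1 (\<gamma> t)) (at t)) \<and> (\<forall>t. \<gamma> (t + 2 * pi) = \<gamma> t)"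
      by (intro exI[of _ \<gamma>]) auto
  qed
qed

end
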